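(* Let $\Phi:\mathbb{R}^N\to\mathbb{R}^M$ and $L:\mathbb{R}^P\to\mathbb{R}^N$ be linear operators, let $\|\cdot\|_A$ be a norm on $\mathbb{R}^P$ with dual norm $\|\cdot\|_A^*$, and set $R(x)=\|L^*x\|_A$. Let $y\in\mathbb{R}^M$, $\lambda>0$, and let $x^\star$ be a minimizer of $\min_{x\in\mathbb{R}^N}\tfrac12\|y-\Phi x\|_2^2+\lambda R(x)$. Assume $\|\cdot\|_A$ is decomposable at $u^\star=L^*x^\star$ with associated subspace $T$ and vector $e\in T$, and let $S=T^\perp$. Assume that there exist $\eta\in\mathbb{R}^M$ and $\alpha\in\partial\|\cdot\|_A(L^*x^\star)$ with $\Phi^*\eta=L\alpha$ and $\|\alpha_S\|_A^*<1$, and that $\Phi$ is injective on $\ker(L_S^* )$. Then $x^\star$ is the unique minimizer of this problem.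
   Context: For a subspace $V\subset\mathbb{R}^P$, $P_V$ denotes the orthogonal projector onto $V$, and $L_V=LP_V$, $L_V^*=P_VL^*$, $\alpha_V=P_V\alpha$ for $\alpha\in\mathbb{R}^P$. A norm $\|\cdot\|_A$ on $\mathbb{R}^P$ is decomposable at $u\in\mathbb{R}^P$ if (i) there exist a subspace $T\subset\mathbb{R}^P$ and a vector $e\in T$ such that $\partial\|\cdot\|_A(u)=\{\alpha\in\mathbb{R}^P:\ \alpha_T=e,\ \|\alpha_{T^\perp}\|_A^*\le 1\}$, and (ii) for every $z\in T^\perp$, $\|z\|_A=\sup\{\langle v,z\rangle: v\in T^\perp,\ \|v\|_A^*\le 1\}$. *)

theory Defs
  imports "HOL-Analysis.Analysis"
begin

definition is_norm :: "('a::real_vector \<Rightarrow> real) \<Rightarrow> bool" where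
  "is_norm N \<longleftrightarrow> (\<forall>x. 0 \<le> N x) \<and> (\<forall>x. N x = 0 \<longleftrightarrow> x = 0)
     \<and> (\<forall>c x. N (c *\<^sub>R x) = \<bar>c\<bar> * N x) \<and> (\<forall>x y. N (x + y) \<le> N x + N y)"

definition dual_norm :: "('a::real_inner \<Rightarrow> real) \<Rightarrow> 'a \<Rightarrow> real" where
  "dual_norm N v = Sup {v \<bullet> z | z. N z \<le> 1}"

definition subdifferential :: "('a::real_inner \<Rightarrow> real) \<Rightarrow> 'a \<Rightarrow> 'a set" where
  "subdifferential f u = {a. \<forall>z. f u + a \<bullet> (z - u) \<le> f z}"

definition proj :: "'a::euclidean_space set \<Rightarrow> 'a \<Rightarrow> 'a" where
  "proj V x = (THE p. p \<in> V \<and> x - p \<in> orthogonal_comp V)"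

definition decomposable_at :: "('a::euclidean_space \<Rightarrow> real) \<Rightarrow> 'a \<Rightarrow> 'a set \<Rightarrow> 'a \<Rightarrow> bool" where
  "decomposable_at N u T e \<longleftrightarrow> subspace T \<and> e \<in> T
     \<and> subdifferential N u =
         {\<alpha>. proj T \<alpha> = e \<and> dual_norm N (proj (orthogonal_comp T) \<alpha>) \<le> 1}
     \<and> (\<forall>z \<in> orthogonal_comp T.
          N z = Sup {v \<bullet> z | v. v \<in> orthogonal_comp T \<and> dual_norm N v \<le> 1})"

end

theory Submission
  imports Defs
begin

text \<open>
  Two minimizers \<open>x\<close> and \<open>x\<^sup>\<star>\<close> have the same image under \<open>\<Phi>\<close>: otherwise
  their midpoint would be strictly better, by strict convexity of the quadratic term. So
  they also have the same regularizer value, and \<open>w = L\<^sup>*(x - x\<^sup>\<star>)\<close> does not increase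
  the norm at \<open>u\<^sup>\<star>\<close>. Testing this against the subgradients \<open>e + v\<close>,
  \<open>v \<in> S\<close>, \<open>\<parallel>v\<parallel>\<^sub>A\<^sup>* \<le> 1\<close>, and using the second half of decomposability gives
  \<open>\<parallel>w\<^sub>S\<parallel>\<^sub>A \<le> -\<langle>e, w\<rangle>\<close>. The dual certificate makes \<open>\<langle>\<alpha>, w\<rangle> = \<langle>\<eta>, \<Phi>(x - x\<^sup>\<star>)\<rangle> = 0\<close>,
  hence \<open>-\<langle>e, w\<rangle> = \<langle>\<alpha>\<^sub>S, w\<^sub>S\<rangle> \<le> \<parallel>\<alpha>\<^sub>S\<parallel>\<^sub>A\<^sup>* \<parallel>w\<^sub>S\<parallel>\<^sub>A\<close>, which forces \<open>w\<^sub>S = 0\<close>.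
  Now \<open>x - x\<^sup>\<star>\<close> lies in \<open>ker L\<^sub>S\<^sup>*\<close> and in \<open>ker \<Phi>\<close>, so it vanishes.
\<close>

lemma proj_unique:
  fixes V :: "'a::euclidean_space set"
  assumes "subspace V" "p \<in> V" "x - p \<in> orthogonal_comp V"
  shows "proj V x = p"
  unfolding proj_def
proof (rule the_equality)
  show "p \<in> V \<and> x - p \<in> orthogonal_comp V" using assms(2,3) ..
next
  fix q assume q: "q \<in> V \<and> x - q \<in> orthogonal_comp V"
  have "p - q \<in> V" using assms(1,2) q by (simp add: subspace_diff)
  moreover have "(x - q) - (x - p) \<in> orthogonal_comp V"
    using assms(3) q subspace_diff[OF subspace_orthogonal_comp] by blast
  then have "p - q \<in> orthogonal_comp V" by simp
  ultimately have "p - q \<in> V \<inter> orthogonal_comp V" by blast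
  then show "q = p" using orthogonal_Int_0[OF assms(1)] by simp
qed

lemma proj_in_subspace_and_orthogonal:
  fixes V :: "'a::euclidean_space set"
  assumes "subspace V"
  shows "proj V x \<in> V" "x - proj V x \<in> orthogonal_comp V"
proof -
  obtain v w where vw: "x = v + w" "v \<in> V" "w \<in> orthogonal_comp V"
    using subspace_sum_orthogonal_comp[OF assms] set_plus_elim by (metis UNIV_I)
  then have "proj V x = v" using proj_unique[OF assms, of v x] by simp
  with vw show "proj V x \<in> V" "x - proj V x \<in> orthogonal_comp V" by simp_all
qed

lemma proj_orthogonal_comp:
  fixes V :: "'a::euclidean_space set"
  assumes "subspace V"
  shows "proj (orthogonal_comp V) x = x - proj V x"
proof (rule proj_unique[OF subspace_orthogonal_comp])
  show "x - proj V x \<in> orthogonal_comp V" by (rule proj_in_subspace_and_orthogonal(2)[OF assms])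
  show "x - (x - proj V x) \<in> orthogonal_comp (orthogonal_comp V)"
    using proj_in_subspace_and_orthogonal(1)[OF assms] orthogonal_comp_self[OF assms] by simp
qed

lemma proj_zero:
  fixes V :: "'a::euclidean_space set"
  assumes "subspace V"
  shows "proj V 0 = 0"
  by (rule proj_unique[OF assms subspace_0[OF assms]]) (simp add: subspace_0[OF subspace_orthogonal_comp])

lemma inner_proj_right:
  fixes V :: "'a::euclidean_space set"
  assumes "subspace V" "v \<in> V"
  shows "v \<bullet> proj V x = v \<bullet> x"
proof -
  have "orthogonal v (x - proj V x)"
    using proj_in_subspace_and_orthogonal(2)[OF assms(1)] assms(2)
    unfolding orthogonal_comp_def by blast
  then show ?thesis by (simp add: orthogonal_def inner_diff_right)
qed

lemma is_norm_zero:
  assumes "is_norm N"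
  shows "N 0 = 0"
  using assms unfolding is_norm_def by blast

lemma is_norm_minus:
  assumes "is_norm N"
  shows "N (- x) = N x"
proof -
  have "N (- x) = N ((- 1) *\<^sub>R x)" by simp
  also have "\<dots> = N x" using assms unfolding is_norm_def by (metis abs_minus_cancel abs_one mult_1)
  finally show ?thesis .
qed

lemma is_norm_sum_le:
  assumes "is_norm N" "finite A"
  shows "N (sum f A) \<le> (\<Sum>i\<in>A. N (f i))"
  using assms(2)
proof (induction A rule: finite_induct)
  case (insert a A)
  then show ?case using assms(1) unfolding is_norm_def by (smt (verit) sum.insert)
qed (simp add: is_norm_zero[OF assms(1)])

lemma is_norm_le_Basis_sum:
  fixes N :: "'a::euclidean_space \<Rightarrow> real"
  assumes "is_norm N"
  shows "N z \<le> (\<Sum>b\<in>Basis. N b) * norm z"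
proof -
  have "N z = N (\<Sum>b\<in>Basis. (z \<bullet> b) *\<^sub>R b)" by (simp add: euclidean_representation)
  also have "\<dots> \<le> (\<Sum>b\<in>Basis. N ((z \<bullet> b) *\<^sub>R b))"
    by (rule is_norm_sum_le[OF assms]) simp
  also have "\<dots> = (\<Sum>b\<in>Basis. \<bar>z \<bullet> b\<bar> * N b)"
    using assms by (simp add: is_norm_def)
  also have "\<dots> \<le> (\<Sum>b\<in>Basis. norm z * N b)"
    using assms Basis_le_norm by (intro sum_mono mult_right_mono) (auto simp: is_norm_def)
  finally show ?thesis by (simp add: sum_distrib_left mult.commute)
qed

lemma is_norm_lipschitz:
  fixes N :: "'a::euclidean_space \<Rightarrow> real"
  assumes "is_norm N"
  shows "(\<Sum>b\<in>Basis. N b)-lipschitz_on UNIV N"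
proof (rule lipschitz_onI)
  fix x y :: 'a
  have "N x \<le> N (x - y) + N y" "N y \<le> N (y - x) + N x"
    using assms unfolding is_norm_def by (metis diff_add_cancel)+
  moreover have "N (y - x) = N (x - y)" using is_norm_minus[OF assms, of "x - y"] by simp
  ultimately show "dist (N x) (N y) \<le> (\<Sum>b\<in>Basis. N b) * dist x y"
    using is_norm_le_Basis_sum[OF assms, of "x - y"] by (simp add: dist_real_def dist_norm)
  show "0 \<le> (\<Sum>b\<in>Basis. N b)" using assms by (simp add: is_norm_def sum_nonneg)
qed

text \<open>\<open>c\<close> is the minimum of \<open>N\<close> on the compact Euclidean unit sphere.\<close>
lemma is_norm_ge_norm:
  fixes N :: "'a::euclidean_space \<Rightarrow> real"
  assumes "is_norm N"
  obtains c where "c > 0" "\<And>z. c * norm z \<le> N z"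
proof -
  obtain b :: 'a where "b \<in> Basis" using nonempty_Basis by blast
  then have "sphere (0::'a) 1 \<noteq> {}" by force
  then obtain x0 where x0: "x0 \<in> sphere (0::'a) 1" "\<And>x. x \<in> sphere 0 1 \<Longrightarrow> N x0 \<le> N x"
    using continuous_attains_inf[OF compact_sphere _
        continuous_on_subset[OF lipschitz_on_continuous_on[OF is_norm_lipschitz[OF assms]]]]
    by blast
  have "N x0 > 0"
    using x0(1) assms unfolding is_norm_def by (metis less_eq_real_def norm_zero mem_sphere_0 zero_neq_one)
  moreover have "N x0 * norm z \<le> N z" for z
  proof (cases "z = 0")
    case False
    then have "N x0 \<le> N (inverse (norm z) *\<^sub>R z)" by (intro x0(2)) simp
    also have "\<dots> = inverse (norm z) * N z" using assms unfolding is_norm_def by simp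
    finally show ?thesis using False by (simp add: field_simps)
  qed (simp add: is_norm_zero[OF assms])
  ultimately show ?thesis by (rule that)
qed

lemma inner_le_dual_norm:
  fixes N :: "'a::euclidean_space \<Rightarrow> real"
  assumes "is_norm N"
  shows "a \<bullet> z \<le> dual_norm N a * N z"
proof (cases "z = 0")
  case False
  obtain c where c: "c > 0" "\<And>z. c * norm z \<le> N z" using is_norm_ge_norm[OF assms] by blast
  have bdd: "bdd_above {a \<bullet> z | z. N z \<le> 1}"
  proof (rule bdd_aboveI)
    fix t assume "t \<in> {a \<bullet> z | z. N z \<le> 1}"
    then obtain z where z: "t = a \<bullet> z" "N z \<le> 1" by blast
    have "norm z \<le> 1 / c" using order_trans[OF c(2) z(2)] c(1) by (simp add: field_simps)
    then have "norm a * norm z \<le> norm a / c" using mult_left_mono[OF _ norm_ge_zero] by fastforce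
    then show "t \<le> norm a / c" using z(1) norm_cauchy_schwarz[of a z] by linarith
  qed
  have N_pos: "N z > 0" using False assms unfolding is_norm_def by (metis less_eq_real_def)
  have "N (inverse (N z) *\<^sub>R z) = inverse (N z) * N z"
    using assms unfolding is_norm_def by simp
  also have "\<dots> = 1" using N_pos by simp
  finally have "a \<bullet> (inverse (N z) *\<^sub>R z) \<in> {a \<bullet> z | z. N z \<le> 1}"
    by (intro CollectI exI[of _ "inverse (N z) *\<^sub>R z"] conjI refl) simp
  then have "a \<bullet> (inverse (N z) *\<^sub>R z) \<le> dual_norm N a"
    unfolding dual_norm_def using bdd by (rule cSup_upper)
  then show ?thesis using N_pos by (simp add: field_simps)
qed (simp add: is_norm_zero[OF assms])

lemma dual_norm_zero:
  assumes "is_norm N"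
  shows "dual_norm N 0 = 0"
proof -
  have "N 0 \<le> 1" using is_norm_zero[OF assms] by simp
  then have "{(0::'a) \<bullet> z | z. N z \<le> 1} = {0}" by auto
  then show ?thesis unfolding dual_norm_def by simp
qed

lemma is_norm_convex_on_linear_image:
  assumes "is_norm N" "linear A"
  shows "convex_on UNIV (\<lambda>x. N (A x))"
  unfolding convex_on_def
proof (intro conjI convex_UNIV ballI allI impI)
  fix x y and u v :: real
  assume "0 \<le> u" "0 \<le> v"
  then show "N (A (u *\<^sub>R x + v *\<^sub>R y)) \<le> u * N (A x) + v * N (A y)"
    using assms unfolding is_norm_def by (simp add: linear_add linear_scale) (metis abs_of_nonneg)
qed

lemma norm_midpoint_sq:
  fixes a b :: "'a::real_inner"
  shows "(norm (midpoint a b))\<^sup>2 = ((norm a)\<^sup>2 + (norm b)\<^sup>2) / 2 - (norm (a - b))\<^sup>2 / 4"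
  unfolding midpoint_def by (simp add: power2_norm_eq_inner inner_add_left inner_add_right inner_diff_left
      inner_diff_right inner_commute algebra_simps) (simp add: field_simps)

lemma midpoint_diff_left:
  fixes y a b :: "'a::real_vector"
  shows "midpoint (y - a) (y - b) = y - midpoint a b"
  unfolding midpoint_def by (simp add: scaleR_right_diff_distrib scaleR_right_distrib)
      (metis scaleR_half_double scaleR_right_distrib)

lemma least_squares_minimizers_same_image:
  fixes A :: "'a::real_vector \<Rightarrow> 'b::real_inner"
  assumes "linear A" "convex_on UNIV g"
    and min1: "\<And>x. (1/2) * (norm (y - A x1))\<^sup>2 + g x1 \<le> (1/2) * (norm (y - A x))\<^sup>2 + g x"
    and min2: "\<And>x. (1/2) * (norm (y - A x2))\<^sup>2 + g x2 \<le> (1/2) * (norm (y - A x))\<^sup>2 + g x"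
  shows "A x1 = A x2"
proof -
  define m where "m = midpoint x1 x2"
  have "(norm (y - A m))\<^sup>2
      = ((norm (y - A x1))\<^sup>2 + (norm (y - A x2))\<^sup>2) / 2 - (norm (A x2 - A x1))\<^sup>2 / 4"
    using norm_midpoint_sq[of "y - A x1" "y - A x2"]
    by (simp add: m_def midpoint_diff_left midpoint_linear_image[OF assms(1)])
  moreover have "g m \<le> (1/2) * g x1 + (1/2) * g x2"
    using convex_onD[OF assms(2), of "1/2" x1 x2] by (simp add: m_def midpoint_def scaleR_right_distrib)
  ultimately have "(norm (A x2 - A x1))\<^sup>2 \<le> 0"
    using min1[of m] min1[of x2] min2[of x1] by argo
  then show ?thesis by simp
qed

text \<open>Every \<open>e + v\<close> with \<open>v \<in> T\<^sup>\<bottom>\<close> in the dual unit ball is a subgradient at \<open>u\<close>.\<close>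
lemma decomposable_at_norm_comp_le:
  assumes "is_norm N" "decomposable_at N u T e" "N (u + w) \<le> N u"
  shows "N (proj (orthogonal_comp T) w) \<le> - (e \<bullet> w)"
proof -
  let ?S = "orthogonal_comp T"
  have T: "subspace T" "e \<in> T"
    and subdiff: "subdifferential N u = {\<alpha>. proj T \<alpha> = e \<and> dual_norm N (proj ?S \<alpha>) \<le> 1}"
    and N_S: "\<forall>z \<in> ?S. N z = Sup {v \<bullet> z | v. v \<in> ?S \<and> dual_norm N v \<le> 1}"
    using assms(2) unfolding decomposable_at_def by blast+
  have subgrad: "v \<bullet> proj ?S w \<le> - (e \<bullet> w)" if v: "v \<in> ?S" "dual_norm N v \<le> 1" for v
  proof -
    have "proj T (e + v) = e" using T v by (intro proj_unique) simp_all
    then have "e + v \<in> subdifferential N u"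
      using v subdiff proj_orthogonal_comp[OF T(1), of "e + v"] by simp
    then have "N u + (e + v) \<bullet> ((u + w) - u) \<le> N (u + w)"
      unfolding subdifferential_def by blast
    then have "(e + v) \<bullet> w \<le> 0" using assms(3) by simp
    then show ?thesis
      using inner_proj_right[OF subspace_orthogonal_comp v(1)] by (simp add: inner_add_left)
  qed
  have "0 \<in> ?S" "dual_norm N 0 \<le> 1"
    using dual_norm_zero[OF assms(1)] subspace_0[OF subspace_orthogonal_comp] by simp_all
  then have "Sup {v \<bullet> proj ?S w | v. v \<in> ?S \<and> dual_norm N v \<le> 1} \<le> - (e \<bullet> w)"
    using subgrad by (intro cSup_least) auto
  moreover have "N (proj ?S w) = Sup {v \<bullet> proj ?S w | v. v \<in> ?S \<and> dual_norm N v \<le> 1}"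
    using N_S proj_in_subspace_and_orthogonal(1)[OF subspace_orthogonal_comp] by blast
  ultimately show ?thesis by simp
qed

lemma decomposable_at_proj_comp_eq_0:
  assumes "is_norm N" "decomposable_at N u T e"
    and "\<alpha> \<in> subdifferential N u" "dual_norm N (proj (orthogonal_comp T) \<alpha>) < 1"
    and "N (u + w) \<le> N u" "\<alpha> \<bullet> w = 0"
  shows "proj (orthogonal_comp T) w = 0"
proof -
  let ?S = "orthogonal_comp T"
  define z where "z = proj ?S w"
  have T: "subspace T"
    and "subdifferential N u = {\<beta>. proj T \<beta> = e \<and> dual_norm N (proj ?S \<beta>) \<le> 1}"
    using assms(2) unfolding decomposable_at_def by blast+
  then have "proj T \<alpha> = e" using assms(3) by blast
  then have \<alpha>_S: "proj ?S \<alpha> = \<alpha> - e" by (simp add: proj_orthogonal_comp[OF T])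
  have "N z \<le> - (e \<bullet> w)"
    unfolding z_def by (rule decomposable_at_norm_comp_le[OF assms(1,2,5)])
  also have "\<dots> = proj ?S \<alpha> \<bullet> z"
  proof -
    have "proj ?S \<alpha> \<in> ?S" by (rule proj_in_subspace_and_orthogonal(1)[OF subspace_orthogonal_comp])
    then have "proj ?S \<alpha> \<bullet> z = proj ?S \<alpha> \<bullet> w"
      unfolding z_def by (rule inner_proj_right[OF subspace_orthogonal_comp])
    then show ?thesis using assms(6) by (simp add: \<alpha>_S inner_diff_left)
  qed
  also have "\<dots> \<le> dual_norm N (proj ?S \<alpha>) * N z"
    by (rule inner_le_dual_norm[OF assms(1)])
  finally have "N z \<le> dual_norm N (proj ?S \<alpha>) * N z" .
  moreover have "N z \<ge> 0" using assms(1) unfolding is_norm_def by blast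
  ultimately have "N z = 0" using mult_strict_right_mono[OF assms(4), of "N z"] by fastforce
  then show ?thesis using assms(1) unfolding z_def is_norm_def by blast
qed

theorem corollary1:
  fixes Phi :: "real^'n^'m" and L :: "real^'p^'n" and NA :: "real^'p \<Rightarrow> real"
    and y :: "real^'m" and lam :: real and xs :: "real^'n"
    and T :: "(real^'p) set" and e :: "real^'p"
    and eta :: "real^'m" and \<alpha> :: "real^'p"
  defines "F \<equiv> (\<lambda>x. (1/2) * (norm (y - Phi *v x))\<^sup>2 + lam * NA (transpose L *v x))"
  defines "S \<equiv> orthogonal_comp T"
  assumes norm_A: "is_norm NA"
    and lam_pos: "lam > 0"
    and min: "\<forall>x. F xs \<le> F x"
    and decomp: "decomposable_at NA (transpose L *v xs) T e"
    and alpha_sub: "\<alpha> \<in> subdifferential NA (transpose L *v xs)"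
    and cert: "transpose Phi *v eta = L *v \<alpha>"
    and strict: "dual_norm NA (proj S \<alpha>) < 1"
    and inj: "inj_on (\<lambda>x. Phi *v x) {x. proj S (transpose L *v x) = 0}"
  shows "\<forall>x. (\<forall>x'. F x \<le> F x') \<longrightarrow> x = xs"
proof (intro allI impI)
  fix x assume x_min: "\<forall>x'. F x \<le> F x'"
  define h where "h = x - xs"
  have g_convex: "convex_on UNIV (\<lambda>x. lam * NA (transpose L *v x))"
    by (rule convex_on_cmul[OF less_imp_le[OF lam_pos]
          is_norm_convex_on_linear_image[OF norm_A matrix_vector_mul_linear]])
  have Phi_eq: "Phi *v x = Phi *v xs"
    by (rule least_squares_minimizers_same_image[OF matrix_vector_mul_linear g_convex, where y = y])
      (use x_min min in \<open>simp_all add: F_def\<close>)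
  then have Phi_h: "Phi *v h = 0" unfolding h_def by (simp add: matrix_vector_mult_diff_distrib)
  have "F x = F xs" using x_min min by (meson order_antisym)
  then have NA_eq: "NA (transpose L *v xs + transpose L *v h) = NA (transpose L *v xs)"
    using Phi_eq lam_pos unfolding F_def h_def by (simp add: matrix_vector_mult_diff_distrib)
  have "\<alpha> \<bullet> (transpose L *v h) = (transpose L *v h) \<bullet> \<alpha>" by (rule inner_commute)
  also have "\<dots> = h \<bullet> (L *v \<alpha>)" by (simp add: dot_lmul_matrix)
  also have "\<dots> = (eta v* Phi) \<bullet> h" using cert by (simp add: inner_commute)
  also have "\<dots> = eta \<bullet> (Phi *v h)" by (rule dot_lmul_matrix)
  finally have "\<alpha> \<bullet> (transpose L *v h) = 0" using Phi_h by simp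
  then have "h \<in> {x. proj S (transpose L *v x) = 0}"
    using decomposable_at_proj_comp_eq_0[OF norm_A decomp alpha_sub] strict NA_eq
    unfolding S_def by simp
  moreover have "0 \<in> {x. proj S (transpose L *v x) = 0}"
    unfolding S_def by (simp add: proj_zero subspace_orthogonal_comp)
  ultimately have "h = 0" using inj_onD[OF inj] Phi_h by simp
  then show "x = xs" unfolding h_def by simp
qed

end
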